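(* Let $p^*\in[0,1]$ and let $o^{(1)},o^{(2)},\dots$ be i.i.d. binary observations with $\Pr[o^{(t)}=1]=p^*$. Fix $\beta\in(0,1]$ and an arbitrary initial estimate $\hat p^{(1)}\in[0,1]$, and define $\hat p^{(t+1)}=(1-\beta)\hat p^{(t)}+\beta\,[o^{(t)}=1]$. Then the expected first time $t$ at which $\hat p^{(t)}$ lies in the band $[p^*-\beta,\,p^*+\beta]$ is bounded by $O(\beta^{-2})$. Moreover, the number of updates required for this first visit is lower bounded by $\Omega(\beta^{-1})$ (in the worst case over the initial estimate).
   Context: This is the fixed-rate ("static") sparse exponential moving average (EMA) estimate of the probability of a single item in the stationary binary setting; $[\cdot]$ denotes the indicator. *)

theory Defs
  imports "HOL-Probability.Probability"
begin

text \<open>Observation space: an infinite i.i.d. stream of Bernoulli(p) observations.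
  The stream element at index t (0-based) is the observation o^(t+1); True means o = 1.\<close>
definition obs_space :: "real \<Rightarrow> bool stream measure" where
  "obs_space p = stream_space (measure_pmf (bernoulli_pmf p))"

text \<open>EMA estimate, 0-indexed: ema beta p0 w t is the estimate p-hat^(t+1);
  ema beta p0 w 0 = p-hat^(1) = p0, and
  p-hat^(t+2) = (1-beta) p-hat^(t+1) + beta [o^(t+1) = 1].\<close>
fun ema :: "real \<Rightarrow> real \<Rightarrow> bool stream \<Rightarrow> nat \<Rightarrow> real" where
  "ema \<beta> p0 \<omega> 0 = p0"
| "ema \<beta> p0 \<omega> (Suc t) = (1 - \<beta>) * ema \<beta> p0 \<omega> t + \<beta> * (if \<omega> !! t then 1 else 0)"

text \<open>First (1-based) time t with p-hat^(t) in [p - beta, p + beta]; infinity if never.\<close>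
definition hit_time :: "real \<Rightarrow> real \<Rightarrow> real \<Rightarrow> bool stream \<Rightarrow> ennreal" where
  "hit_time p \<beta> p0 \<omega> =
     (if \<exists>t. \<bar>ema \<beta> p0 \<omega> t - p\<bar> \<le> \<beta>
      then ennreal (real (Suc (LEAST t. \<bar>ema \<beta> p0 \<omega> t - p\<bar> \<le> \<beta>)))
      else \<infinity>)"

end

theory Submission
  imports Defs
begin

text \<open>Upper bound: V x = 1 + |x - p| / \<beta>^2 is a Lyapunov function for the chain outside the band.
  There a single update cannot carry the estimate across p, so the expected distance to p
  contracts exactly by the factor 1 - \<beta>, i.e. drops by \<beta> |x - p| \<ge> \<beta>^2, and V drops by at
  least 1 in expectation. Hence the expected hitting time is at most V p0 \<le> 2 / \<beta>^2.
  Lower bound: every update moves the estimate by at most \<beta>, so starting from the endpoint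
  of [0, 1] farther from p, at distance at least 1/2, at least 1 / (2 \<beta>) updates are needed.\<close>

definition ema_step :: "real \<Rightarrow> real \<Rightarrow> bool \<Rightarrow> real" where
  "ema_step \<beta> x b = (1 - \<beta>) * x + \<beta> * (if b then 1 else 0)"

lemma ema_Suc_step: "ema \<beta> p0 \<omega> (Suc t) = ema_step \<beta> (ema \<beta> p0 \<omega> t) (\<omega> !! t)"
  by (simp add: ema_step_def)

lemma ema_Suc_shift: "ema \<beta> x \<omega> (Suc t) = ema \<beta> (ema_step \<beta> x (shd \<omega>)) (stl \<omega>) t"
  by (induction t) (simp_all add: ema_step_def)

lemma ema_step_bounded:
  assumes "0 \<le> \<beta>" "\<beta> \<le> 1" "0 \<le> x" "x \<le> 1"
  shows "0 \<le> ema_step \<beta> x b" "ema_step \<beta> x b \<le> 1"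
proof -
  have "(1 - \<beta>) * x \<le> 1 - \<beta>" using assms by (simp add: mult_left_le)
  then show "0 \<le> ema_step \<beta> x b" "ema_step \<beta> x b \<le> 1"
    using assms by (auto simp: ema_step_def)
qed

lemma ema_step_dist_le:
  assumes "0 \<le> \<beta>" "\<beta> \<le> 1" "0 \<le> x" "x \<le> 1"
  shows "\<bar>ema_step \<beta> x b - x\<bar> \<le> \<beta>"
proof -
  have "ema_step \<beta> x b - x = \<beta> * ((if b then 1 else 0) - x)"
    by (simp add: ema_step_def algebra_simps)
  moreover have "\<bar>(if b then 1 else 0) - x\<bar> \<le> 1" using assms by auto
  ultimately show ?thesis using assms by (simp add: abs_mult mult_left_le)
qed

lemma ema_bounded:
  assumes "0 \<le> \<beta>" "\<beta> \<le> 1" "0 \<le> p0" "p0 \<le> 1"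
  shows "0 \<le> ema \<beta> p0 \<omega> t \<and> ema \<beta> p0 \<omega> t \<le> 1"
  by (induction t) (use assms ema_step_bounded in \<open>auto simp only: ema_Suc_step ema.simps(1)\<close>)

lemma ema_dist_init_le:
  assumes "0 \<le> \<beta>" "\<beta> \<le> 1" "0 \<le> p0" "p0 \<le> 1"
  shows "\<bar>ema \<beta> p0 \<omega> t - p0\<bar> \<le> real t * \<beta>"
proof (induction t)
  case 0
  then show ?case by simp
next
  case (Suc t)
  have "\<bar>ema \<beta> p0 \<omega> (Suc t) - ema \<beta> p0 \<omega> t\<bar> \<le> \<beta>"
    unfolding ema_Suc_step using assms ema_bounded by (intro ema_step_dist_le) auto
  then show ?case using Suc by (simp add: algebra_simps)
qed

lemma hit_time_ge_dist:
  assumes "0 < \<beta>" "\<beta> \<le> 1" "0 \<le> p0" "p0 \<le> 1"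
  shows "ennreal (\<bar>p0 - p\<bar> / \<beta>) \<le> hit_time p \<beta> p0 \<omega>"
proof (cases "\<exists>t. \<bar>ema \<beta> p0 \<omega> t - p\<bar> \<le> \<beta>")
  case True
  define L where "L = (LEAST t. \<bar>ema \<beta> p0 \<omega> t - p\<bar> \<le> \<beta>)"
  have "\<bar>ema \<beta> p0 \<omega> L - p\<bar> \<le> \<beta>" unfolding L_def using True by (rule LeastI_ex)
  moreover have "\<bar>ema \<beta> p0 \<omega> L - p0\<bar> \<le> real L * \<beta>"
    using assms by (intro ema_dist_init_le) auto
  ultimately have "\<bar>p0 - p\<bar> \<le> real (Suc L) * \<beta>" by (simp add: algebra_simps)
  then have "\<bar>p0 - p\<bar> / \<beta> \<le> real (Suc L)" using assms by (simp add: divide_le_eq)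
  then have "ennreal (\<bar>p0 - p\<bar> / \<beta>) \<le> ennreal (real (Suc L))" by (rule ennreal_leI)
  also have "\<dots> = hit_time p \<beta> p0 \<omega>"
    using True unfolding hit_time_def L_def by (simp only: if_True)
  finally show ?thesis .
next
  case False
  then show ?thesis unfolding hit_time_def by simp
qed

lemma exists_init_hit_time_ge:
  assumes "0 \<le> p" "p \<le> 1" "0 < \<beta>" "\<beta> \<le> 1"
  shows "\<exists>p0. 0 \<le> p0 \<and> p0 \<le> 1 \<and> (\<forall>\<omega>. ennreal ((1/2) / \<beta>) \<le> hit_time p \<beta> p0 \<omega>)"
proof -
  define p0 :: real where "p0 = (if p \<ge> 1/2 then 0 else 1)"
  have p0: "0 \<le> p0" "p0 \<le> 1" "1/2 \<le> \<bar>p0 - p\<bar>" using assms by (auto simp: p0_def)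
  then have "ennreal ((1/2) / \<beta>) \<le> ennreal (\<bar>p0 - p\<bar> / \<beta>)"
    using assms by (intro ennreal_leI divide_right_mono) auto
  then have "ennreal ((1/2) / \<beta>) \<le> hit_time p \<beta> p0 \<omega>" for \<omega>
    using assms p0 hit_time_ge_dist order.trans by blast
  then show ?thesis using p0 by blast
qed

lemma expected_ema_step_dist:
  assumes "0 \<le> p" "p \<le> 1" "0 < \<beta>" "\<beta> \<le> 1" "0 \<le> x" "x \<le> 1" "\<beta> < \<bar>x - p\<bar>"
  shows "p * \<bar>ema_step \<beta> x True - p\<bar> + (1 - p) * \<bar>ema_step \<beta> x False - p\<bar> = (1 - \<beta>) * \<bar>x - p\<bar>"
proof -
  have step: "\<bar>ema_step \<beta> x b - x\<bar> \<le> \<beta>" for b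
    using assms by (intro ema_step_dist_le) auto
  show ?thesis
  proof (cases "p < x")
    case True
    then have "\<bar>ema_step \<beta> x b - p\<bar> = ema_step \<beta> x b - p" for b
      using step[of b] assms(7) by (simp add: abs_le_iff)
    then show ?thesis using True by (simp only:) (simp add: ema_step_def algebra_simps)
  next
    case False
    then have "\<bar>ema_step \<beta> x b - p\<bar> = p - ema_step \<beta> x b" for b
      using step[of b] assms(7) by (simp add: abs_le_iff)
    then show ?thesis using False by (simp only:) (simp add: ema_step_def algebra_simps)
  qed
qed

definition lyapunov :: "real \<Rightarrow> real \<Rightarrow> real \<Rightarrow> real" where
  "lyapunov p \<beta> x = 1 + \<bar>x - p\<bar> / \<beta>^2"

lemma lyapunov_drift:
  assumes "0 \<le> p" "p \<le> 1" "0 < \<beta>" "\<beta> \<le> 1" "0 \<le> x" "x \<le> 1" "\<beta> < \<bar>x - p\<bar>"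
  shows "(1 + lyapunov p \<beta> (ema_step \<beta> x True)) * p + (1 + lyapunov p \<beta> (ema_step \<beta> x False)) * (1 - p)
         \<le> lyapunov p \<beta> x"
proof -
  have "(1 + lyapunov p \<beta> (ema_step \<beta> x True)) * p + (1 + lyapunov p \<beta> (ema_step \<beta> x False)) * (1 - p)
        = 2 + (p * \<bar>ema_step \<beta> x True - p\<bar> + (1 - p) * \<bar>ema_step \<beta> x False - p\<bar>) / \<beta>^2"
    using assms by (simp add: lyapunov_def field_simps)
  also have "\<dots> = 2 + (1 - \<beta>) * \<bar>x - p\<bar> / \<beta>^2"
    using assms by (simp add: expected_ema_step_dist)
  also have "\<dots> = 2 + \<bar>x - p\<bar> / \<beta>^2 - \<bar>x - p\<bar> / \<beta>"
    using assms by (simp add: field_simps power2_eq_square)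
  also have "\<dots> \<le> lyapunov p \<beta> x"
    using assms by (simp add: lyapunov_def)
  finally show ?thesis .
qed

lemma lyapunov_le:
  assumes "0 \<le> p" "p \<le> 1" "0 < \<beta>" "\<beta> \<le> 1" "0 \<le> x" "x \<le> 1"
  shows "lyapunov p \<beta> x \<le> 2 / \<beta>^2"
proof -
  have "\<beta>^2 \<le> 1" using assms by (simp add: power_le_one)
  then have "1 \<le> 1 / \<beta>^2" using assms by simp
  moreover have "\<bar>x - p\<bar> / \<beta>^2 \<le> 1 / \<beta>^2" using assms by (intro divide_right_mono) auto
  ultimately show ?thesis unfolding lyapunov_def by (simp add: add_divide_distrib[symmetric])
qed

text \<open>hit_time_upto p \<beta> n x \<omega> is min n (hit_time p \<beta> x \<omega>).\<close>
fun hit_time_upto :: "real \<Rightarrow> real \<Rightarrow> nat \<Rightarrow> real \<Rightarrow> bool stream \<Rightarrow> ennreal" where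
  "hit_time_upto p \<beta> 0 x \<omega> = 0"
| "hit_time_upto p \<beta> (Suc n) x \<omega> =
     (if \<bar>x - p\<bar> \<le> \<beta> then 1 else 1 + hit_time_upto p \<beta> n (ema_step \<beta> x (shd \<omega>)) (stl \<omega>))"

lemma hit_time_upto_eq_of_nat:
  assumes "\<forall>s<k. \<not> \<bar>ema \<beta> x \<omega> s - p\<bar> \<le> \<beta>"
  shows "hit_time_upto p \<beta> (Suc k) x \<omega> = of_nat (Suc k)"
  using assms
proof (induction k arbitrary: x \<omega>)
  case 0
  then show ?case by simp
next
  case (Suc k)
  have "\<not> \<bar>x - p\<bar> \<le> \<beta>" using Suc.prems[rule_format, of 0] by simp
  moreover have "\<forall>s<k. \<not> \<bar>ema \<beta> (ema_step \<beta> x (shd \<omega>)) (stl \<omega>) s - p\<bar> \<le> \<beta>"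
    using Suc.prems by (auto simp flip: ema_Suc_shift)
  ultimately show ?case using Suc.IH by (simp del: of_nat_Suc) (simp add: add.commute)
qed

lemma hit_time_le_SUP_hit_time_upto:
  "hit_time p \<beta> x \<omega> \<le> (SUP n. hit_time_upto p \<beta> n x \<omega>)"
proof (cases "\<exists>t. \<bar>ema \<beta> x \<omega> t - p\<bar> \<le> \<beta>")
  case True
  define L where "L = (LEAST t. \<bar>ema \<beta> x \<omega> t - p\<bar> \<le> \<beta>)"
  have "\<forall>s<L. \<not> \<bar>ema \<beta> x \<omega> s - p\<bar> \<le> \<beta>" unfolding L_def using not_less_Least by blast
  then have "hit_time_upto p \<beta> (Suc L) x \<omega> = of_nat (Suc L)" by (rule hit_time_upto_eq_of_nat)
  also have "\<dots> = hit_time p \<beta> x \<omega>"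
    using True unfolding hit_time_def L_def ennreal_of_nat_eq_real_of_nat by (simp only: if_True)
  finally show ?thesis by (metis SUP_upper UNIV_I)
next
  case False
  then have "hit_time_upto p \<beta> n x \<omega> = of_nat n" for n
    by (cases n) (simp, metis hit_time_upto_eq_of_nat)
  then have "(SUP n. hit_time_upto p \<beta> n x \<omega>) = \<infinity>"
    by (simp add: ennreal_SUP_of_nat_eq_top)
  then show ?thesis by (simp only: infinity_ennreal_def top_greatest)
qed

lemma hit_time_upto_le_Suc: "hit_time_upto p \<beta> n x \<omega> \<le> hit_time_upto p \<beta> (Suc n) x \<omega>"
proof (induction n arbitrary: x \<omega>)
  case 0
  then show ?case by simp
next
  case (Suc n)
  then show ?case
    by (cases "\<bar>x - p\<bar> \<le> \<beta>") (simp_all only: hit_time_upto.simps(2) if_True if_False order_refl add_left_mono)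
qed

lemma measurable_hit_time_upto:
  "(\<lambda>\<omega>. hit_time_upto p \<beta> n x \<omega>) \<in> borel_measurable (obs_space q)"
  unfolding obs_space_def
proof (induction n arbitrary: x)
  case 0
  then show ?case by simp
next
  case (Suc n)
  show ?case
  proof (cases "\<bar>x - p\<bar> \<le> \<beta>")
    case True
    then show ?thesis by simp
  next
    case False
    then have "hit_time_upto p \<beta> (Suc n) x \<omega> =
                 (if shd \<omega> then 1 + hit_time_upto p \<beta> n (ema_step \<beta> x True) (stl \<omega>)
                  else 1 + hit_time_upto p \<beta> n (ema_step \<beta> x False) (stl \<omega>))" for \<omega>
      by simp
    note [measurable] = Suc.IH[of "ema_step \<beta> x True"] Suc.IH[of "ema_step \<beta> x False"]
    show ?thesis unfolding \<open>\<And>\<omega>. hit_time_upto p \<beta> (Suc n) x \<omega> = _\<close> by measurable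
  qed
qed

lemma prob_space_obs_space: "prob_space (obs_space p)"
  unfolding obs_space_def by (intro prob_space.prob_space_stream_space prob_space_measure_pmf)

lemma nn_integral_hit_time_upto_Suc:
  assumes "0 \<le> p" "p \<le> 1" "\<not> \<bar>x - p\<bar> \<le> \<beta>"
  shows "(\<integral>\<^sup>+\<omega>. hit_time_upto p \<beta> (Suc n) x \<omega> \<partial>obs_space p) =
           (1 + \<integral>\<^sup>+\<omega>. hit_time_upto p \<beta> n (ema_step \<beta> x True) \<omega> \<partial>obs_space p) * ennreal p
         + (1 + \<integral>\<^sup>+\<omega>. hit_time_upto p \<beta> n (ema_step \<beta> x False) \<omega> \<partial>obs_space p) * ennreal (1 - p)"
proof -
  let ?M = "measure_pmf (bernoulli_pmf p)"
  interpret prob_space "obs_space p" by (rule prob_space_obs_space)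
  have one_plus: "(\<integral>\<^sup>+\<omega>. 1 + hit_time_upto p \<beta> n y \<omega> \<partial>obs_space p)
                  = 1 + (\<integral>\<^sup>+\<omega>. hit_time_upto p \<beta> n y \<omega> \<partial>obs_space p)" for y
    by (subst nn_integral_add) (simp_all add: emeasure_space_1 measurable_hit_time_upto)
  have "(\<integral>\<^sup>+\<omega>. hit_time_upto p \<beta> (Suc n) x \<omega> \<partial>obs_space p)
        = (\<integral>\<^sup>+b. (\<integral>\<^sup>+\<omega>. hit_time_upto p \<beta> (Suc n) x (b ## \<omega>) \<partial>obs_space p) \<partial>?M)"
    unfolding obs_space_def
    by (rule prob_space.nn_integral_stream_space[OF prob_space_measure_pmf measurable_hit_time_upto[unfolded obs_space_def]])
  also have "\<dots> = (\<integral>\<^sup>+b. 1 + (\<integral>\<^sup>+\<omega>. hit_time_upto p \<beta> n (ema_step \<beta> x b) \<omega> \<partial>obs_space p) \<partial>?M)"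
    using assms(3) by (simp add: one_plus)
  also have "\<dots> = (1 + \<integral>\<^sup>+\<omega>. hit_time_upto p \<beta> n (ema_step \<beta> x True) \<omega> \<partial>obs_space p) * ennreal p
         + (1 + \<integral>\<^sup>+\<omega>. hit_time_upto p \<beta> n (ema_step \<beta> x False) \<omega> \<partial>obs_space p) * ennreal (1 - p)"
    using assms(1,2) by simp
  finally show ?thesis .
qed

lemma nn_integral_hit_time_upto_le_lyapunov:
  assumes "0 \<le> p" "p \<le> 1" "0 < \<beta>" "\<beta> \<le> 1" "0 \<le> x" "x \<le> 1"
  shows "(\<integral>\<^sup>+\<omega>. hit_time_upto p \<beta> n x \<omega> \<partial>obs_space p) \<le> ennreal (lyapunov p \<beta> x)"
  using assms(5,6)
proof (induction n arbitrary: x)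
  case 0
  then show ?case by simp
next
  case (Suc n)
  interpret prob_space "obs_space p" by (rule prob_space_obs_space)
  show ?case
  proof (cases "\<bar>x - p\<bar> \<le> \<beta>")
    case True
    then show ?thesis by (simp add: emeasure_space_1 lyapunov_def ennreal_ge_1)
  next
    case False
    have IH: "1 + (\<integral>\<^sup>+\<omega>. hit_time_upto p \<beta> n (ema_step \<beta> x b) \<omega> \<partial>obs_space p)
                \<le> ennreal (1 + lyapunov p \<beta> (ema_step \<beta> x b))" for b
    proof -
      have "(\<integral>\<^sup>+\<omega>. hit_time_upto p \<beta> n (ema_step \<beta> x b) \<omega> \<partial>obs_space p)
              \<le> ennreal (lyapunov p \<beta> (ema_step \<beta> x b))"
        using assms Suc.prems by (intro Suc.IH ema_step_bounded) auto
      then show ?thesis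
        by (subst ennreal_plus) (auto simp: lyapunov_def add_left_mono)
    qed
    have "(\<integral>\<^sup>+\<omega>. hit_time_upto p \<beta> (Suc n) x \<omega> \<partial>obs_space p) =
             (1 + \<integral>\<^sup>+\<omega>. hit_time_upto p \<beta> n (ema_step \<beta> x True) \<omega> \<partial>obs_space p) * ennreal p
           + (1 + \<integral>\<^sup>+\<omega>. hit_time_upto p \<beta> n (ema_step \<beta> x False) \<omega> \<partial>obs_space p) * ennreal (1 - p)"
      using assms False by (intro nn_integral_hit_time_upto_Suc)
    also have "\<dots> \<le> ennreal (1 + lyapunov p \<beta> (ema_step \<beta> x True)) * ennreal p
                     + ennreal (1 + lyapunov p \<beta> (ema_step \<beta> x False)) * ennreal (1 - p)"
      by (intro add_mono mult_right_mono IH) auto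
    also have "\<dots> = ennreal ((1 + lyapunov p \<beta> (ema_step \<beta> x True)) * p
                              + (1 + lyapunov p \<beta> (ema_step \<beta> x False)) * (1 - p))"
      using assms by (simp add: lyapunov_def ennreal_plus ennreal_mult)
    also have "\<dots> \<le> ennreal (lyapunov p \<beta> x)"
      using assms Suc.prems False by (intro ennreal_leI lyapunov_drift) auto
    finally show ?thesis .
  qed
qed

lemma nn_integral_hit_time_le:
  assumes "0 \<le> p" "p \<le> 1" "0 < \<beta>" "\<beta> \<le> 1" "0 \<le> p0" "p0 \<le> 1"
  shows "(\<integral>\<^sup>+\<omega>. hit_time p \<beta> p0 \<omega> \<partial>obs_space p) \<le> ennreal (2 / \<beta>^2)"
proof -
  have "(\<integral>\<^sup>+\<omega>. hit_time p \<beta> p0 \<omega> \<partial>obs_space p)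
        \<le> (\<integral>\<^sup>+\<omega>. (SUP n. hit_time_upto p \<beta> n p0 \<omega>) \<partial>obs_space p)"
    by (intro nn_integral_mono hit_time_le_SUP_hit_time_upto)
  also have "\<dots> = (SUP n. \<integral>\<^sup>+\<omega>. hit_time_upto p \<beta> n p0 \<omega> \<partial>obs_space p)"
    by (intro nn_integral_monotone_convergence_SUP incseq_SucI le_funI hit_time_upto_le_Suc)
       (simp add: measurable_hit_time_upto)
  also have "\<dots> \<le> ennreal (lyapunov p \<beta> p0)"
    using assms by (intro SUP_least nn_integral_hit_time_upto_le_lyapunov)
  also have "\<dots> \<le> ennreal (2 / \<beta>^2)"
    using assms by (intro ennreal_leI lyapunov_le)
  finally show ?thesis .
qed

theorem theorem1:
  shows "(\<exists>C>0. \<forall>p \<beta> p0. 0 \<le> p \<and> p \<le> 1 \<and> 0 < \<beta> \<and> \<beta> \<le> 1 \<and> 0 \<le> p0 \<and> p0 \<le> 1 \<longrightarrow>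
            (\<integral>\<^sup>+ \<omega>. hit_time p \<beta> p0 \<omega> \<partial>obs_space p) \<le> ennreal (C / \<beta>^2))
       \<and> (\<exists>c>0. \<forall>p \<beta>. 0 \<le> p \<and> p \<le> 1 \<and> 0 < \<beta> \<and> \<beta> \<le> 1 \<longrightarrow>
            (\<exists>p0. 0 \<le> p0 \<and> p0 \<le> 1 \<and>
               (AE \<omega> in obs_space p. ennreal (c / \<beta>) \<le> hit_time p \<beta> p0 \<omega>)))"
proof (intro conjI)
  show "\<exists>C>0. \<forall>p \<beta> p0. 0 \<le> p \<and> p \<le> 1 \<and> 0 < \<beta> \<and> \<beta> \<le> 1 \<and> 0 \<le> p0 \<and> p0 \<le> 1 \<longrightarrow>
          (\<integral>\<^sup>+ \<omega>. hit_time p \<beta> p0 \<omega> \<partial>obs_space p) \<le> ennreal (C / \<beta>^2)"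
    by (intro exI[of _ 2]) (auto intro: nn_integral_hit_time_le)
  show "\<exists>c>0. \<forall>p \<beta>. 0 \<le> p \<and> p \<le> 1 \<and> 0 < \<beta> \<and> \<beta> \<le> 1 \<longrightarrow>
          (\<exists>p0. 0 \<le> p0 \<and> p0 \<le> 1 \<and> (AE \<omega> in obs_space p. ennreal (c / \<beta>) \<le> hit_time p \<beta> p0 \<omega>))"
  proof (rule exI[of _ "1/2"], intro conjI allI impI)
    fix p \<beta> :: real
    assume "0 \<le> p \<and> p \<le> 1 \<and> 0 < \<beta> \<and> \<beta> \<le> 1"
    then obtain p0 where "0 \<le> p0" "p0 \<le> 1" "\<forall>\<omega>. ennreal ((1/2) / \<beta>) \<le> hit_time p \<beta> p0 \<omega>"
      using exists_init_hit_time_ge by blast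
    then show "\<exists>p0. 0 \<le> p0 \<and> p0 \<le> 1 \<and> (AE \<omega> in obs_space p. ennreal ((1/2) / \<beta>) \<le> hit_time p \<beta> p0 \<omega>)"
      by (blast intro: AE_I2)
  qed simp
qed

end
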